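(* Let $\alpha>-1$, $\alpha\ne0$, and let $\eta_1=\eta_1(\alpha)\in(0,1)$ be the root of the equation $\eta^\alpha=\dfrac{1}{1+\alpha(\eta+1)}$. Define for $0\le\eta\le1$ $$\psi_0(\alpha,\eta)=\dfrac{(1+\eta^{\alpha+1})^{1/\alpha}}{(1+\eta)^{(\alpha+1)/\alpha}}+\dfrac{(\alpha+1)^{(\alpha+1)/\alpha}}{\alpha}\left[\dfrac1{1+\eta^{\alpha+1}}-\dfrac1{1+\eta}\right],\qquad \psi_1(\alpha,\eta)=2\dfrac{(1+\eta^{\alpha+1})^{1/\alpha}}{(1+\eta)^{(\alpha+1)/\alpha}},$$ and let $\psi(\alpha,\eta)=\psi_0(\alpha,\eta)$ for $0\le\eta\le\eta_1$ and $\psi(\alpha,\eta)=\psi_1(\alpha,\eta)$ for $\eta_1\le\eta\le1$. Then $$\max_{0\le\eta\le1}\psi(\alpha,\eta)=\max_{0\le\eta\le\eta_1}\psi_0(\alpha,\eta).$$ *)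

theory Defs
  imports "HOL-Analysis.Analysis"
begin

definition psi0 :: "real \<Rightarrow> real \<Rightarrow> real" where
  "psi0 \<alpha> \<eta> =
     (1 + \<eta> powr (\<alpha> + 1)) powr (1 / \<alpha>) / (1 + \<eta>) powr ((\<alpha> + 1) / \<alpha>)
     + ((\<alpha> + 1) powr ((\<alpha> + 1) / \<alpha>) / \<alpha>)
       * (1 / (1 + \<eta> powr (\<alpha> + 1)) - 1 / (1 + \<eta>))"

definition psi1 :: "real \<Rightarrow> real \<Rightarrow> real" where
  "psi1 \<alpha> \<eta> =
     2 * ((1 + \<eta> powr (\<alpha> + 1)) powr (1 / \<alpha>) / (1 + \<eta>) powr ((\<alpha> + 1) / \<alpha>))"

definition psi :: "real \<Rightarrow> real \<Rightarrow> real \<Rightarrow> real" where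
  "psi \<alpha> \<eta>1 \<eta> = (if \<eta> \<le> \<eta>1 then psi0 \<alpha> \<eta> else psi1 \<alpha> \<eta>)"

end

theory Submission
  imports Defs
begin

text \<open>
  On \<open>(0, 1]\<close> the function \<open>psi1 \<alpha>\<close> is non-increasing: the logarithm of
  \<open>(1 + \<eta> powr (\<alpha> + 1)) powr (1 / \<alpha>) / (1 + \<eta>) powr ((\<alpha> + 1) / \<alpha>)\<close> has derivative
  \<open>(\<alpha> + 1) (\<eta> powr \<alpha> - 1) / (\<alpha> (1 + \<eta> powr (\<alpha> + 1)) (1 + \<eta>))\<close>, and \<open>(\<eta> powr \<alpha> - 1) / \<alpha> \<le> 0\<close>
  for \<open>\<eta> \<le> 1\<close>. The equation defining \<open>\<eta>1\<close> makes both \<open>psi0 \<alpha> \<eta>1\<close> and \<open>psi1 \<alpha> \<eta>1\<close> equal to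
  \<open>2 (1 + \<alpha>) powr (1 / \<alpha>) \<eta>1 / (1 + \<eta>1)\<close>, so every value of \<open>psi\<close> beyond \<open>\<eta>1\<close> is
  dominated by \<open>psi0 \<alpha> \<eta>1\<close>.
\<close>

lemma SUP_real_eq_if_dominated:
  fixes f g :: "'a \<Rightarrow> real"
  assumes "A \<subseteq> B" "\<And>x. x \<in> A \<Longrightarrow> f x = g x" "\<And>x. x \<in> B \<Longrightarrow> \<exists>y\<in>A. f x \<le> g y"
  shows "(SUP x\<in>B. f x) = (SUP x\<in>A. g x)"
proof -
  have "(\<forall>x\<in>B. f x \<le> z) \<longleftrightarrow> (\<forall>y\<in>A. g y \<le> z)" for z
  proof
    assume "\<forall>x\<in>B. f x \<le> z"
    then show "\<forall>y\<in>A. g y \<le> z"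
      using assms(1,2) by (metis subsetD)
  next
    assume "\<forall>y\<in>A. g y \<le> z"
    then show "\<forall>x\<in>B. f x \<le> z"
      using assms(3) by (meson order_trans)
  qed
  \<comment> \<open>No boundedness needed: \<open>Sup\<close> on \<open>real\<close> is the least upper bound, so it depends only
    on the set of upper bounds.\<close>
  then show ?thesis
    unfolding Sup_real_def by simp
qed

lemma powr_minus_one_div_nonpos:
  fixes x \<alpha> :: real
  assumes "0 < x" "x \<le> 1"
  shows "(x powr \<alpha> - 1) / \<alpha> \<le> 0"
proof (cases "\<alpha> \<ge> 0")
  case True
  then have "x powr \<alpha> \<le> 1"
    using assms by (simp add: powr_le1)
  with True show ?thesis
    by (simp add: divide_nonpos_nonneg)
next
  case False
  then have "1 \<le> x powr \<alpha>"
    using powr_mono2'[of \<alpha> x 1] assms by simp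
  with False show ?thesis
    by (simp add: divide_nonneg_neg)
qed

lemma has_real_derivative_ln_psi_factor:
  fixes \<alpha> x :: real
  assumes "0 < x" "\<alpha> \<noteq> 0"
  shows "((\<lambda>y. ln (1 + y powr (\<alpha> + 1)) / \<alpha> - (\<alpha> + 1) * ln (1 + y) / \<alpha>)
    has_real_derivative
      (\<alpha> + 1) * ((x powr \<alpha> - 1) / \<alpha>) / ((1 + x powr (\<alpha> + 1)) * (1 + x))) (at x)"
proof -
  have pos: "0 < 1 + x powr (\<alpha> + 1)"
    by (simp add: add_pos_nonneg)
  have "((\<lambda>y. y powr (\<alpha> + 1)) has_real_derivative (\<alpha> + 1) * x powr \<alpha>) (at x)"
    using has_real_derivative_powr[OF assms(1), of "\<alpha> + 1"] by simp
  then have "((\<lambda>y. ln (1 + y powr (\<alpha> + 1)) / \<alpha> - (\<alpha> + 1) * ln (1 + y) / \<alpha>)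
    has_real_derivative
      ((\<alpha> + 1) * x powr \<alpha>) / (1 + x powr (\<alpha> + 1)) / \<alpha> - (\<alpha> + 1) * (1 / (1 + x)) / \<alpha>) (at x)"
    using assms pos by (auto intro!: derivative_eq_intros)
  moreover have "((\<alpha> + 1) * x powr \<alpha>) / (1 + x powr (\<alpha> + 1)) / \<alpha> - (\<alpha> + 1) * (1 / (1 + x)) / \<alpha>
      = (\<alpha> + 1) * ((x powr \<alpha> - 1) / \<alpha>) / ((1 + x powr (\<alpha> + 1)) * (1 + x))"
    using assms pos by (simp add: divide_simps) (simp add: powr_add algebra_simps)
  ultimately show ?thesis
    by simp
qed

lemma psi1_antimono:
  fixes \<alpha> a b :: real
  assumes "\<alpha> > -1" "\<alpha> \<noteq> 0" "0 < a" "a \<le> b" "b \<le> 1"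
  shows "psi1 \<alpha> b \<le> psi1 \<alpha> a"
proof -
  define L where "L y = ln (1 + y powr (\<alpha> + 1)) / \<alpha> - (\<alpha> + 1) * ln (1 + y) / \<alpha>" for y :: real
  have psi1_exp: "psi1 \<alpha> y = 2 * exp (L y)" if "0 < y" for y
    using that
    by (simp add: psi1_def L_def powr_def exp_diff mult.commute add_pos_pos[THEN order_less_imp_not_eq2])
  have "L b \<le> L a"
  proof (rule DERIV_nonpos_imp_nonincreasing[OF \<open>a \<le> b\<close>])
    fix x
    assume x: "a \<le> x" "x \<le> b"
    then have "0 < x" "x \<le> 1"
      using assms by auto
    have "(\<alpha> + 1) * ((x powr \<alpha> - 1) / \<alpha>) \<le> 0"
      using assms(1) \<open>0 < x\<close> \<open>x \<le> 1\<close>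
      by (intro mult_nonneg_nonpos powr_minus_one_div_nonpos) auto
    moreover have "0 < (1 + x powr (\<alpha> + 1)) * (1 + x)"
      using \<open>0 < x\<close> by (simp add: add_pos_nonneg)
    ultimately have "(\<alpha> + 1) * ((x powr \<alpha> - 1) / \<alpha>) / ((1 + x powr (\<alpha> + 1)) * (1 + x)) \<le> 0"
      by (rule divide_nonpos_pos)
    then show "\<exists>y. (L has_real_derivative y) (at x) \<and> y \<le> 0"
      using has_real_derivative_ln_psi_factor[OF \<open>0 < x\<close> \<open>\<alpha> \<noteq> 0\<close>]
      unfolding L_def[abs_def] by blast
  qed
  then show ?thesis
    using assms by (simp add: psi1_exp)
qed

lemma powr_succ_at_root:
  fixes \<alpha> t :: real
  assumes "0 < t" "t powr \<alpha> = 1 / (1 + \<alpha> * (t + 1))"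
  shows "0 < 1 + \<alpha> * (t + 1)"
    and "1 + t powr (\<alpha> + 1) = (1 + \<alpha>) * (1 + t) / (1 + \<alpha> * (t + 1))"
proof -
  have "0 < t powr \<alpha>"
    using assms(1) by simp
  then show D: "0 < 1 + \<alpha> * (t + 1)"
    unfolding assms(2) by (simp add: zero_less_divide_1_iff)
  have "t powr (\<alpha> + 1) = t / (1 + \<alpha> * (t + 1))"
    using assms by (simp add: powr_add)
  then show "1 + t powr (\<alpha> + 1) = (1 + \<alpha>) * (1 + t) / (1 + \<alpha> * (t + 1))"
    using D by (simp add: field_simps)
qed

lemma psi_factor_at_root:
  fixes \<alpha> t :: real
  assumes "\<alpha> > -1" "\<alpha> \<noteq> 0" "0 < t" and root: "t powr \<alpha> = 1 / (1 + \<alpha> * (t + 1))"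
  shows "(1 + t powr (\<alpha> + 1)) powr (1 / \<alpha>) / (1 + t) powr ((\<alpha> + 1) / \<alpha>)
    = (1 + \<alpha>) powr (1 / \<alpha>) * t / (1 + t)"
proof -
  define D where "D = 1 + \<alpha> * (t + 1)"
  have D: "0 < D" and sum: "1 + t powr (\<alpha> + 1) = (1 + \<alpha>) * (1 + t) / D"
    using powr_succ_at_root[OF \<open>0 < t\<close> root] by (simp_all add: D_def)
  have "t = (t powr \<alpha>) powr (1 / \<alpha>)"
    using \<open>\<alpha> \<noteq> 0\<close> \<open>0 < t\<close> by (simp add: powr_powr)
  also have "\<dots> = 1 / D powr (1 / \<alpha>)"
    using D by (simp add: root D_def[symmetric] powr_divide)
  finally have t: "D powr (1 / \<alpha>) = 1 / t"
    using D \<open>0 < t\<close> by (auto simp: field_simps)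
  have exp: "(1 + t) powr ((\<alpha> + 1) / \<alpha>) = (1 + t) * (1 + t) powr (1 / \<alpha>)"
    using assms by (simp add: add_divide_distrib powr_add)
  show ?thesis
    unfolding sum exp using assms D by (simp add: powr_divide powr_mult t)
qed

lemma psi0_correction_at_root:
  fixes \<alpha> t :: real
  assumes "\<alpha> > -1" "\<alpha> \<noteq> 0" "0 < t" and root: "t powr \<alpha> = 1 / (1 + \<alpha> * (t + 1))"
  shows "(\<alpha> + 1) powr ((\<alpha> + 1) / \<alpha>) / \<alpha> * (1 / (1 + t powr (\<alpha> + 1)) - 1 / (1 + t))
    = (1 + \<alpha>) powr (1 / \<alpha>) * t / (1 + t)"
proof -
  define D where "D = 1 + \<alpha> * (t + 1)"
  have D: "0 < D" and sum: "1 + t powr (\<alpha> + 1) = (1 + \<alpha>) * (1 + t) / D"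
    using powr_succ_at_root[OF \<open>0 < t\<close> root] by (simp_all add: D_def)
  have "1 / (1 + t powr (\<alpha> + 1)) - 1 / (1 + t) = D / ((1 + \<alpha>) * (1 + t)) - (1 + \<alpha>) / ((1 + \<alpha>) * (1 + t))"
    unfolding sum using assms by simp
  also have "\<dots> = \<alpha> * t / ((1 + \<alpha>) * (1 + t))"
    unfolding diff_divide_distrib[symmetric] by (simp add: D_def algebra_simps)
  finally have diff: "1 / (1 + t powr (\<alpha> + 1)) - 1 / (1 + t) = \<alpha> * t / ((1 + \<alpha>) * (1 + t))" .
  have exp: "(\<alpha> + 1) powr ((\<alpha> + 1) / \<alpha>) = (1 + \<alpha>) * (1 + \<alpha>) powr (1 / \<alpha>)"
    using assms by (simp add: add_divide_distrib powr_add add.commute)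
  show ?thesis
    unfolding diff exp using assms by (simp add: divide_simps)
qed

lemma psi1_eq_psi0_at_root:
  fixes \<alpha> t :: real
  assumes "\<alpha> > -1" "\<alpha> \<noteq> 0" "0 < t" "t powr \<alpha> = 1 / (1 + \<alpha> * (t + 1))"
  shows "psi1 \<alpha> t = psi0 \<alpha> t"
  unfolding psi0_def psi1_def psi_factor_at_root[OF assms] psi0_correction_at_root[OF assms]
  by simp

theorem corollary2p4:
  fixes \<alpha> \<eta>1 :: real
  assumes "\<alpha> > -1" and "\<alpha> \<noteq> 0"
    and "0 < \<eta>1" and "\<eta>1 < 1"
    and "\<eta>1 powr \<alpha> = 1 / (1 + \<alpha> * (\<eta>1 + 1))"
  shows "(SUP \<eta>\<in>{0..1}. psi \<alpha> \<eta>1 \<eta>) = (SUP \<eta>\<in>{0..\<eta>1}. psi0 \<alpha> \<eta>)"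
proof (rule SUP_real_eq_if_dominated)
  show "{0..\<eta>1} \<subseteq> {0..1}"
    using assms by auto
  show "psi \<alpha> \<eta>1 \<eta> = psi0 \<alpha> \<eta>" if "\<eta> \<in> {0..\<eta>1}" for \<eta>
    using that by (simp add: psi_def)
  show "\<exists>\<eta>'\<in>{0..\<eta>1}. psi \<alpha> \<eta>1 \<eta> \<le> psi0 \<alpha> \<eta>'" if "\<eta> \<in> {0..1}" for \<eta>
  proof (cases "\<eta> \<le> \<eta>1")
    case True
    then have "psi \<alpha> \<eta>1 \<eta> = psi0 \<alpha> \<eta>" and "\<eta> \<in> {0..\<eta>1}"
      using that by (simp_all add: psi_def)
    then show ?thesis
      by (intro bexI[of _ \<eta>]) simp_all
  next
    case False
    then have "psi \<alpha> \<eta>1 \<eta> = psi1 \<alpha> \<eta>"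
      by (simp add: psi_def)
    also have "\<dots> \<le> psi1 \<alpha> \<eta>1"
      using assms that False by (intro psi1_antimono) auto
    also have "\<dots> = psi0 \<alpha> \<eta>1"
      using assms by (intro psi1_eq_psi0_at_root)
    finally show ?thesis
      using \<open>0 < \<eta>1\<close> by (intro bexI[of _ \<eta>1]) simp_all
  qed
qed

end
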